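(* Let $X:=\{x_i\}_{i\in[n]}$ be any sequence in $\mathbb{R}^d$, let $k\ge 2$ and $s\ge k$ be integers, draw indices $\{i_j\}_{j\in[s]}$ uniformly from $[n]$ either independently with replacement, or without replacement (in which case $s\le n$), and put $Y:=\{x_{i_j}\}_{j\in[s]}$. Then \[\mathbb{E}\operatorname{SDP}(Y,k)\le \mathbb{E}\operatorname{IP}(Y,k)\le \operatorname{IP}(X,k).\]
   Context: For a tuple $Y=\{y_j\}_{j\in[m]}$ in $\mathbb{R}^d$ (repeated points allowed) and $m\ge k$: $\Pi(m,k)$ is the set of partitions of $[m]$ into $k$ nonempty sets; $c_S:=\frac1{|S|}\sum_{j\in S}y_j$; $\operatorname{IP}(Y,k):=\min_{\Gamma\in\Pi(m,k)}\frac1m\sum_{S\in\Gamma}\sum_{j\in S}\|y_j-c_S\|^2$ (the normalized $k$-means value). $D_Y\in\mathbb{R}^{m\times m}$ has entries $\|y_i-y_j\|^2$, and $\operatorname{SDP}(Y,k):=\min\{\frac1{2m}\operatorname{tr}(D_YZ): Z\in\mathbb{R}^{m\times m},\ Z\mathbf 1=\mathbf 1,\ \operatorname{tr}Z=k,\ Z\ge0\text{ entrywise},\ Z\succeq0\}$ (the normalized Peng–Wei relaxation value). *)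

theory Defs
  imports "HOL-Analysis.Analysis" "HOL-Probability.Probability"
begin

text \<open>A tuple Y of m points is a function nat => 'a, read on indices 0..<m.\<close>

definition centroid :: "(nat \<Rightarrow> 'a::euclidean_space) \<Rightarrow> nat set \<Rightarrow> 'a" where
  "centroid Y S = (1 / real (card S)) *\<^sub>R (\<Sum>j\<in>S. Y j)"

definition Partitions :: "nat \<Rightarrow> nat \<Rightarrow> nat set set set" where
  "Partitions m k = {\<Gamma>. partition_on {..<m} \<Gamma> \<and> card \<Gamma> = k}"

definition IP :: "nat \<Rightarrow> (nat \<Rightarrow> 'a::euclidean_space) \<Rightarrow> nat \<Rightarrow> real" where
  "IP m Y k = Min ((\<lambda>\<Gamma>. (1 / real m) * (\<Sum>S\<in>\<Gamma>. \<Sum>j\<in>S. (norm (Y j - centroid Y S))\<^sup>2))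
                   ` Partitions m k)"

definition distmat :: "(nat \<Rightarrow> 'a::euclidean_space) \<Rightarrow> nat \<Rightarrow> nat \<Rightarrow> real" where
  "distmat Y i j = (norm (Y i - Y j))\<^sup>2"

text \<open>Feasible set of the Peng--Wei relaxation (m x m real matrices as functions on indices < m);
  Z \<succeq> 0 means symmetric positive semidefinite.\<close>
definition SDP_feasible :: "nat \<Rightarrow> nat \<Rightarrow> (nat \<Rightarrow> nat \<Rightarrow> real) \<Rightarrow> bool" where
  "SDP_feasible m k Z \<longleftrightarrow>
     (\<forall>i<m. (\<Sum>j<m. Z i j) = 1) \<and>
     (\<Sum>i<m. Z i i) = real k \<and>
     (\<forall>i<m. \<forall>j<m. Z i j \<ge> 0) \<and>
     (\<forall>i<m. \<forall>j<m. Z i j = Z j i) \<and>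
     (\<forall>v :: nat \<Rightarrow> real. (\<Sum>i<m. \<Sum>j<m. v i * Z i j * v j) \<ge> 0)"

definition SDP :: "nat \<Rightarrow> (nat \<Rightarrow> 'a::euclidean_space) \<Rightarrow> nat \<Rightarrow> real" where
  "SDP m Y k = Inf {(1 / (2 * real m)) * (\<Sum>i<m. \<Sum>j<m. distmat Y i j * Z j i) | Z. SDP_feasible m k Z}"

definition samples_wr :: "nat \<Rightarrow> nat \<Rightarrow> (nat \<Rightarrow> nat) set" where
  "samples_wr n s = PiE {..<s} (\<lambda>_. {..<n})"

definition samples_wor :: "nat \<Rightarrow> nat \<Rightarrow> (nat \<Rightarrow> nat) set" where
  "samples_wor n s = {i \<in> samples_wr n s. inj_on i {..<s}}"

end

theory Submission
  imports Defs
begin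

text \<open>
  For a partition \<Gamma> of the sample into k clusters, the matrix
  Z = \<Sum>S\<in>\<Gamma>. 1_S 1_S^T / |S| is feasible for the Peng--Wei relaxation and its objective
  equals the k-means cost of \<Gamma>; taking \<Gamma> optimal gives SDP \<le> IP for every sample.

  For the second inequality fix an optimal k-partition of X and label each sampled point by
  the block of its index. The sample then carries at most k labels, and since splitting
  clusters never increases the cost (here k \<le> s is used), IP(Y) is at most the mean squared
  distance of the sampled points to the centroids of their blocks in X. Both sampling schemes
  are invariant under transposing two population labels, so every sampled index is uniform
  on [n], and the expectation of this bound is exactly IP(X).
\<close>

lemma sum_diff_centroid_eq_0:
  fixes Y :: "nat \<Rightarrow> 'a::euclidean_space"
  assumes "finite S"
  shows "(\<Sum>j\<in>S. Y j - centroid Y S) = 0"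
proof (cases "S = {}")
  case False
  then show ?thesis using assms
    by (simp add: sum_subtractf centroid_def scaleR_sum_right[symmetric] sum_constant_scaleR)
qed simp

lemma sum_sq_dist_centroid_le:
  fixes Y :: "nat \<Rightarrow> 'a::euclidean_space"
  assumes "finite S"
  shows "(\<Sum>j\<in>S. (norm (Y j - centroid Y S))\<^sup>2) \<le> (\<Sum>j\<in>S. (norm (Y j - c))\<^sup>2)"
proof -
  define z where "z j = Y j - centroid Y S" for j
  define d where "d = centroid Y S - c"
  have "(norm (Y j - c))\<^sup>2 = (norm (z j))\<^sup>2 + 2 * (z j \<bullet> d) + (norm d)\<^sup>2" for j
    unfolding z_def d_def
    by (simp add: power2_norm_eq_inner algebra_simps inner_commute)
  then have "(\<Sum>j\<in>S. (norm (Y j - c))\<^sup>2)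
      = (\<Sum>j\<in>S. (norm (z j))\<^sup>2) + 2 * ((\<Sum>j\<in>S. z j) \<bullet> d) + (\<Sum>j\<in>S. (norm d)\<^sup>2)"
    by (simp add: sum.distrib sum_distrib_left inner_sum_left)
  also have "(\<Sum>j\<in>S. z j) = 0"
    unfolding z_def using assms by (rule sum_diff_centroid_eq_0)
  finally show ?thesis by (simp add: z_def sum_nonneg)
qed

lemma sum_sq_pairwise_dist_eq:
  fixes Y :: "nat \<Rightarrow> 'a::euclidean_space"
  assumes "finite S"
  shows "(\<Sum>i\<in>S. \<Sum>j\<in>S. (norm (Y i - Y j))\<^sup>2)
       = 2 * real (card S) * (\<Sum>j\<in>S. (norm (Y j - centroid Y S))\<^sup>2)"
proof -
  define z where "z j = Y j - centroid Y S" for j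
  have "(norm (Y i - Y j))\<^sup>2 = (norm (z i))\<^sup>2 + (norm (z j))\<^sup>2 - 2 * (z i \<bullet> z j)" for i j
    unfolding z_def by (simp add: power2_norm_eq_inner algebra_simps inner_commute)
  then have "(\<Sum>i\<in>S. \<Sum>j\<in>S. (norm (Y i - Y j))\<^sup>2)
      = (\<Sum>i\<in>S. \<Sum>j\<in>S. (norm (z i))\<^sup>2 + (norm (z j))\<^sup>2) - 2 * (\<Sum>i\<in>S. \<Sum>j\<in>S. z i \<bullet> z j)"
    by (simp add: sum_subtractf sum_distrib_left)
  also have "(\<Sum>i\<in>S. \<Sum>j\<in>S. (norm (z i))\<^sup>2 + (norm (z j))\<^sup>2) = 2 * real (card S) * (\<Sum>j\<in>S. (norm (z j))\<^sup>2)"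
    by (simp add: sum.distrib sum_distrib_left[symmetric] sum.swap[of "\<lambda>i j. (norm (z j))\<^sup>2"])
  also have "(\<Sum>i\<in>S. \<Sum>j\<in>S. z i \<bullet> z j) = (\<Sum>i\<in>S. z i) \<bullet> (\<Sum>j\<in>S. z j)"
    by (simp add: inner_sum_left inner_sum_right sum.swap[of "\<lambda>i j. z i \<bullet> z j"])
  also have "(\<Sum>j\<in>S. z j) = 0"
    unfolding z_def using assms by (rule sum_diff_centroid_eq_0)
  finally show ?thesis by (simp add: z_def)
qed

definition cluster_cost :: "(nat \<Rightarrow> 'a::euclidean_space) \<Rightarrow> nat set set \<Rightarrow> real" where
  "cluster_cost Y P = (\<Sum>S\<in>P. \<Sum>j\<in>S. (norm (Y j - centroid Y S))\<^sup>2)"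

lemma IP_eq_Min_cluster_cost:
  "IP m Y k = Min ((\<lambda>\<Gamma>. (1 / real m) * cluster_cost Y \<Gamma>) ` Partitions m k)"
  unfolding IP_def cluster_cost_def ..

lemma partition_on_block_finite:
  assumes "finite A" "partition_on A P" "S \<in> P"
  shows "finite S" "card S > 0"
proof -
  show "finite S"
    using assms partition_onD1[OF assms(2)] by (metis Union_upper finite_subset)
  then show "card S > 0"
    using assms(3) partition_onD3[OF assms(2)] by (auto simp: card_gt_0_iff)
qed

lemma partition_on_split_block:
  assumes P: "partition_on A P" and S: "S \<in> P" "x \<in> S" "S \<noteq> {x}"
  shows "partition_on A (insert {x} (insert (S - {x}) (P - {S})))"
    and "{x} \<notin> insert (S - {x}) (P - {S})"
    and "S - {x} \<notin> P - {S}"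
proof -
  have disj: "disjnt S (\<Union>(P - {S}))"
    using partition_onD2[OF P] S(1) by (auto simp: disjoint_def disjnt_def)
  have "partition_on A (insert S (P - {S}))"
    using P S(1) by (simp add: insert_absorb)
  then have rest: "partition_on (A - S) (P - {S})"
    using partition_on_insert[OF disj] by blast
  have disj': "disjnt {x} (\<Union>(insert (S - {x}) (P - {S})))" "disjnt (S - {x}) (\<Union>(P - {S}))"
    using disj S(2) by (auto simp: disjnt_def)
  have "S \<subseteq> A" using partition_onD1[OF P] S(1) by blast
  moreover have "A - {x} - (S - {x}) = A - S" using S(2) by blast
  ultimately show "partition_on A (insert {x} (insert (S - {x}) (P - {S})))"
    using rest disj' S(2,3) by (auto simp: partition_on_insert)
  show "{x} \<notin> insert (S - {x}) (P - {S})" "S - {x} \<notin> P - {S}"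
    using disj' S(2,3) by (auto simp: disjnt_def)
qed

lemma cluster_cost_split_block_le:
  fixes Y :: "nat \<Rightarrow> 'a::euclidean_space"
  assumes P: "partition_on A P" "finite P" and S: "S \<in> P" "finite S" "x \<in> S" "S \<noteq> {x}"
  shows "cluster_cost Y (insert {x} (insert (S - {x}) (P - {S}))) \<le> cluster_cost Y P"
proof -
  let ?cost = "\<lambda>T. \<Sum>j\<in>T. (norm (Y j - centroid Y T))\<^sup>2"
  have "cluster_cost Y (insert {x} (insert (S - {x}) (P - {S})))
      = ?cost {x} + ?cost (S - {x}) + cluster_cost Y (P - {S})"
    using partition_on_split_block(2,3)[OF P(1) S(1,3,4)] P(2)
    by (simp add: cluster_cost_def)
  also have "?cost {x} = 0" by (simp add: centroid_def)
  also have "?cost (S - {x}) \<le> (\<Sum>j\<in>S - {x}. (norm (Y j - centroid Y S))\<^sup>2)"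
    using S(2) by (simp add: sum_sq_dist_centroid_le)
  also have "\<dots> \<le> ?cost S"
    using S(2,3) by (simp add: sum.remove)
  also have "0 + ?cost S + cluster_cost Y (P - {S}) = cluster_cost Y P"
    using P(2) S(1) by (simp add: cluster_cost_def sum.remove)
  finally show ?thesis by simp
qed

lemma partition_on_ex_nonsingleton_block:
  assumes "finite A" "partition_on A P" "card P < card A"
  shows "\<exists>S\<in>P. \<exists>x\<in>S. S \<noteq> {x}"
proof (rule ccontr)
  assume singletons: "\<not> ?thesis"
  have card_block: "card S = 1" if S: "S \<in> P" for S
  proof -
    have "S \<noteq> {}" using S partition_onD3[OF assms(2)] by blast
    then obtain x where "x \<in> S" by blast
    then have "S = {x}" using singletons S by blast
    then show ?thesis by simp
  qed
  have "card A = (\<Sum>S\<in>P. card S)"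
    using product_partition[OF assms(2) partition_on_block_finite(1)[OF assms(1,2)]] .
  also have "\<dots> = card P" using card_block by simp
  finally show False using assms(3) by simp
qed

lemma exists_partition_card_eq_cluster_cost_le:
  fixes Y :: "nat \<Rightarrow> 'a::euclidean_space"
  assumes "finite A" "partition_on A P" "card P \<le> k" "k \<le> card A"
  shows "\<exists>Q. partition_on A Q \<and> card Q = k \<and> cluster_cost Y Q \<le> cluster_cost Y P"
  using assms(2,3)
proof (induction "k - card P" arbitrary: P)
  case 0
  then show ?case by auto
next
  case (Suc d)
  have finP: "finite P" using finite_elements[OF assms(1) Suc.prems(1)] .
  have "card P < k" using Suc.hyps(2) by linarith
  then obtain S x where S: "S \<in> P" "x \<in> S" "S \<noteq> {x}"
    using partition_on_ex_nonsingleton_block[OF assms(1) Suc.prems(1)] assms(4) by auto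
  have finS: "finite S" using partition_on_block_finite(1)[OF assms(1) Suc.prems(1) S(1)] .
  define P' where "P' = insert {x} (insert (S - {x}) (P - {S}))"
  note split = partition_on_split_block[OF Suc.prems(1) S, folded P'_def]
  have "card P > 0" using finP S(1) card_gt_0_iff by blast
  then have "card P' = Suc (card P)"
    using split(2,3) finP S(1) by (simp add: P'_def card.insert_remove)
  then have "d = k - card P'" "card P' \<le> k" using Suc.hyps(2) by linarith+
  then obtain Q where "partition_on A Q" "card Q = k" "cluster_cost Y Q \<le> cluster_cost Y P'"
    using Suc.hyps(1)[OF _ split(1)] by blast
  moreover have "cluster_cost Y P' \<le> cluster_cost Y P"
    unfolding P'_def by (rule cluster_cost_split_block_le[OF Suc.prems(1) finP S(1) finS S(2,3)])
  ultimately show ?case by force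
qed

lemma partition_on_fibres: "partition_on A ((\<lambda>l. {x\<in>A. f x = l}) ` f ` A)"
  by (rule partition_onI) (auto simp: disjnt_def)

lemma cluster_cost_fibres_le:
  fixes Y :: "nat \<Rightarrow> 'a::euclidean_space"
  assumes "finite A"
  shows "cluster_cost Y ((\<lambda>l. {j\<in>A. lab j = l}) ` lab ` A) \<le> (\<Sum>j\<in>A. (norm (Y j - c (lab j)))\<^sup>2)"
proof -
  let ?F = "\<lambda>l. {j\<in>A. lab j = l}"
  have "inj_on ?F (lab ` A)" by (rule inj_onI) blast
  then have "cluster_cost Y (?F ` lab ` A) = (\<Sum>l\<in>lab ` A. \<Sum>j\<in>?F l. (norm (Y j - centroid Y (?F l)))\<^sup>2)"
    unfolding cluster_cost_def by (rule sum.reindex_cong) auto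
  also have "\<dots> \<le> (\<Sum>l\<in>lab ` A. \<Sum>j\<in>?F l. (norm (Y j - c l))\<^sup>2)"
    using assms by (intro sum_mono sum_sq_dist_centroid_le) simp
  also have "\<dots> = (\<Sum>l\<in>lab ` A. \<Sum>j\<in>?F l. (norm (Y j - c (lab j)))\<^sup>2)"
    by (intro sum.cong) auto
  also have "\<dots> = (\<Sum>j\<in>A. (norm (Y j - c (lab j)))\<^sup>2)"
    using assms by (intro sum.group) auto
  finally show ?thesis .
qed

lemma finite_Partitions: "finite (Partitions m k)"
  by (rule finite_subset[OF _ finitely_many_partition_on[of "{..<m}"]]) (auto simp: Partitions_def)

lemma IP_le_labelling_cost:
  fixes Y :: "nat \<Rightarrow> 'a::euclidean_space"
  assumes "card (lab ` {..<m}) \<le> k" "k \<le> m"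
  shows "IP m Y k \<le> (1 / real m) * (\<Sum>j<m. (norm (Y j - c (lab j)))\<^sup>2)"
proof -
  let ?P = "(\<lambda>l. {j\<in>{..<m}. lab j = l}) ` lab ` {..<m}"
  have "card ?P \<le> card (lab ` {..<m})" by (rule card_image_le) simp
  then have "\<exists>Q. partition_on {..<m} Q \<and> card Q = k \<and> cluster_cost Y Q \<le> cluster_cost Y ?P"
    using assms by (intro exists_partition_card_eq_cluster_cost_le partition_on_fibres) simp_all
  then obtain Q where Q: "partition_on {..<m} Q" "card Q = k" "cluster_cost Y Q \<le> cluster_cost Y ?P"
    by blast
  then have "IP m Y k \<le> (1 / real m) * cluster_cost Y Q"
    unfolding IP_eq_Min_cluster_cost
    by (intro Min_le finite_imageI finite_Partitions) (auto simp: Partitions_def)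
  also have "\<dots> \<le> (1 / real m) * (\<Sum>j<m. (norm (Y j - c (lab j)))\<^sup>2)"
    using Q(3) cluster_cost_fibres_le[of "{..<m}" Y lab c] by (intro mult_left_mono) auto
  finally show ?thesis .
qed

lemma Partitions_nonempty:
  assumes "1 \<le> k" "k \<le> m"
  shows "Partitions m k \<noteq> {}"
proof -
  have "partition_on {..<m} {{..<m}}"
    using assms by (intro partition_on_space) (auto simp: lessThan_empty_iff)
  then obtain Q where "partition_on {..<m} Q" "card Q = k"
    using exists_partition_card_eq_cluster_cost_le[of "{..<m}" "{{..<m}}" k "\<lambda>_. 0::real"] assms by auto
  then show ?thesis unfolding Partitions_def by auto
qed

lemma IP_attained:
  fixes Y :: "nat \<Rightarrow> 'a::euclidean_space"
  assumes "1 \<le> k" "k \<le> m"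
  obtains \<Gamma> where "\<Gamma> \<in> Partitions m k" "IP m Y k = (1 / real m) * cluster_cost Y \<Gamma>"
proof -
  have "IP m Y k \<in> (\<lambda>\<Gamma>. (1 / real m) * cluster_cost Y \<Gamma>) ` Partitions m k"
    unfolding IP_eq_Min_cluster_cost using Partitions_nonempty[OF assms] finite_Partitions
    by (intro Min_in finite_imageI) auto
  then show ?thesis using that by auto
qed

definition block_of :: "'a set set \<Rightarrow> 'a \<Rightarrow> 'a set" where
  "block_of P x = (THE S. S \<in> P \<and> x \<in> S)"

lemma block_of_eq:
  assumes "partition_on A P" "S \<in> P" "x \<in> S"
  shows "block_of P x = S"
  unfolding block_of_def
  by (rule the_equality) (use assms disjointD[OF partition_onD2[OF assms(1)]] in blast)+

lemma block_of_mem: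
  assumes "partition_on A P" "x \<in> A"
  shows "block_of P x \<in> P" "x \<in> block_of P x"
proof -
  obtain S where "S \<in> P" "x \<in> S" using assms partition_onD1 by blast
  then show "block_of P x \<in> P" "x \<in> block_of P x" using block_of_eq[OF assms(1)] by auto
qed

definition cluster_matrix :: "nat set set \<Rightarrow> nat \<Rightarrow> nat \<Rightarrow> real" where
  "cluster_matrix \<Gamma> i j = (\<Sum>S\<in>\<Gamma>. if i \<in> S \<and> j \<in> S then 1 / real (card S) else 0)"

lemma cluster_matrix_commute: "cluster_matrix \<Gamma> i j = cluster_matrix \<Gamma> j i"
  unfolding cluster_matrix_def by (simp add: conj_commute)

lemma sum_sum_mult_cluster_matrix:
  assumes "\<Gamma> \<subseteq> Pow {..<m}"
  shows "(\<Sum>i<m. \<Sum>j<m. h i j * cluster_matrix \<Gamma> i j) = (\<Sum>S\<in>\<Gamma>. (\<Sum>i\<in>S. \<Sum>j\<in>S. h i j) / real (card S))"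
proof -
  let ?g = "\<lambda>S i j. if i \<in> S \<and> j \<in> S then h i j / real (card S) else 0"
  have "(\<Sum>i<m. \<Sum>j<m. h i j * cluster_matrix \<Gamma> i j) = (\<Sum>i<m. \<Sum>j<m. \<Sum>S\<in>\<Gamma>. ?g S i j)"
    unfolding cluster_matrix_def sum_distrib_left by (intro sum.cong refl) simp
  also have "\<dots> = (\<Sum>i<m. \<Sum>S\<in>\<Gamma>. \<Sum>j<m. ?g S i j)"
    by (intro sum.cong refl sum.swap)
  also have "\<dots> = (\<Sum>S\<in>\<Gamma>. \<Sum>i<m. \<Sum>j<m. ?g S i j)"
    by (rule sum.swap)
  also have "\<dots> = (\<Sum>S\<in>\<Gamma>. \<Sum>i\<in>S. \<Sum>j\<in>S. h i j / real (card S))"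
  proof (rule sum.cong[OF refl])
    fix S assume "S \<in> \<Gamma>"
    then have "{..<m} \<inter> S = S" using assms by blast
    have "(\<Sum>i<m. \<Sum>j<m. ?g S i j)
        = (\<Sum>i<m. if i \<in> S then (\<Sum>j<m. if j \<in> S then h i j / real (card S) else 0) else 0)"
      by (intro sum.cong refl) auto
    then show "(\<Sum>i<m. \<Sum>j<m. ?g S i j) = (\<Sum>i\<in>S. \<Sum>j\<in>S. h i j / real (card S))"
      using \<open>{..<m} \<inter> S = S\<close> by (simp add: sum.inter_restrict[symmetric])
  qed
  finally show ?thesis by (simp add: sum_divide_distrib)
qed

lemma sum_cluster_matrix_row:
  assumes \<Gamma>: "partition_on {..<m} \<Gamma>" and i: "i < m"
  shows "(\<Sum>j<m. cluster_matrix \<Gamma> i j) = 1"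
proof -
  have "finite \<Gamma>" using finite_elements[OF _ \<Gamma>] by simp
  have "(\<Sum>j<m. cluster_matrix \<Gamma> i j) = (\<Sum>S\<in>\<Gamma>. \<Sum>j<m. if i \<in> S \<and> j \<in> S then 1 / real (card S) else 0)"
    unfolding cluster_matrix_def by (rule sum.swap)
  also have "\<dots> = (\<Sum>S\<in>\<Gamma>. if S = block_of \<Gamma> i then 1 else 0)"
  proof (rule sum.cong[OF refl])
    fix S assume S: "S \<in> \<Gamma>"
    then have "S \<subseteq> {..<m}" "card S \<noteq> 0"
      using partition_onD1[OF \<Gamma>] partition_on_block_finite(2)[OF finite_lessThan \<Gamma> S] by auto
    then have "(\<Sum>j<m. if i \<in> S \<and> j \<in> S then 1 / real (card S) else 0) = (if i \<in> S then 1 else 0)"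
      by (simp add: sum.inter_restrict[symmetric] Int_absorb1)
    moreover have "i \<in> S \<longleftrightarrow> S = block_of \<Gamma> i"
      using block_of_eq[OF \<Gamma> S] block_of_mem[OF \<Gamma>] i by blast
    ultimately show "(\<Sum>j<m. if i \<in> S \<and> j \<in> S then 1 / real (card S) else 0)
        = (if S = block_of \<Gamma> i then 1 else 0)" by simp
  qed
  also have "\<dots> = 1" using \<open>finite \<Gamma>\<close> block_of_mem(1)[OF \<Gamma>] i by simp
  finally show ?thesis .
qed

lemma SDP_feasible_cluster_matrix:
  assumes \<Gamma>: "partition_on {..<m} \<Gamma>" "card \<Gamma> = k"
  shows "SDP_feasible m k (cluster_matrix \<Gamma>)"
  unfolding SDP_feasible_def
proof (intro conjI allI impI)
  have sub: "\<Gamma> \<subseteq> Pow {..<m}" using partition_onD1[OF \<Gamma>(1)] by blast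
  have blocks: "finite S" "card S > 0" if "S \<in> \<Gamma>" for S
    using partition_on_block_finite[OF _ \<Gamma>(1) that] by simp_all
  show "(\<Sum>j<m. cluster_matrix \<Gamma> i j) = 1" if "i < m" for i
    using sum_cluster_matrix_row[OF \<Gamma>(1) that] .
  have "(\<Sum>i<m. cluster_matrix \<Gamma> i i)
      = (\<Sum>i<m. \<Sum>j<m. (if i = j then 1 else 0) * cluster_matrix \<Gamma> i j)"
    by (simp add: if_distrib[of "\<lambda>x. x * _"] cong: if_cong)
  also have "\<dots> = (\<Sum>S\<in>\<Gamma>. 1)"
    unfolding sum_sum_mult_cluster_matrix[OF sub]
    by (intro sum.cong refl) (use blocks in \<open>auto simp: card_gt_0_iff\<close>)
  finally show "(\<Sum>i<m. cluster_matrix \<Gamma> i i) = real k" using \<Gamma>(2) by simp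
  show "cluster_matrix \<Gamma> i j \<ge> 0" for i j
    unfolding cluster_matrix_def by (intro sum_nonneg) simp
  show "cluster_matrix \<Gamma> i j = cluster_matrix \<Gamma> j i" for i j
    by (rule cluster_matrix_commute)
  fix v :: "nat \<Rightarrow> real"
  have "(\<Sum>i<m. \<Sum>j<m. v i * cluster_matrix \<Gamma> i j * v j)
      = (\<Sum>i<m. \<Sum>j<m. (v i * v j) * cluster_matrix \<Gamma> i j)"
    by (simp add: ac_simps)
  also have "\<dots> = (\<Sum>S\<in>\<Gamma>. (\<Sum>i\<in>S. v i)\<^sup>2 / real (card S))"
    unfolding sum_sum_mult_cluster_matrix[OF sub]
    by (simp add: power2_eq_square sum_product)
  finally show "(\<Sum>i<m. \<Sum>j<m. v i * cluster_matrix \<Gamma> i j * v j) \<ge> 0"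
    by (simp add: sum_nonneg)
qed

lemma trace_distmat_cluster_matrix:
  fixes Y :: "nat \<Rightarrow> 'a::euclidean_space"
  assumes \<Gamma>: "partition_on {..<m} \<Gamma>"
  shows "(\<Sum>i<m. \<Sum>j<m. distmat Y i j * cluster_matrix \<Gamma> j i) = 2 * cluster_cost Y \<Gamma>"
proof -
  have sub: "\<Gamma> \<subseteq> Pow {..<m}" using partition_onD1[OF \<Gamma>] by blast
  have "(\<Sum>i<m. \<Sum>j<m. distmat Y i j * cluster_matrix \<Gamma> j i)
      = (\<Sum>S\<in>\<Gamma>. (\<Sum>i\<in>S. \<Sum>j\<in>S. (norm (Y i - Y j))\<^sup>2) / real (card S))"
    by (simp add: cluster_matrix_commute[of _ _ i for i] sum_sum_mult_cluster_matrix[OF sub] distmat_def)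
  also have "\<dots> = (\<Sum>S\<in>\<Gamma>. 2 * (\<Sum>j\<in>S. (norm (Y j - centroid Y S))\<^sup>2))"
  proof (rule sum.cong[OF refl])
    fix S assume "S \<in> \<Gamma>"
    then have "finite S" using partition_on_block_finite(1)[OF _ \<Gamma>] by simp
    then show "(\<Sum>i\<in>S. \<Sum>j\<in>S. (norm (Y i - Y j))\<^sup>2) / real (card S)
        = 2 * (\<Sum>j\<in>S. (norm (Y j - centroid Y S))\<^sup>2)"
      by (simp add: sum_sq_pairwise_dist_eq)
  qed
  finally show ?thesis by (simp add: cluster_cost_def sum_distrib_left)
qed

lemma SDP_le_objective:
  fixes Y :: "nat \<Rightarrow> 'a::euclidean_space"
  assumes "SDP_feasible m k Z"
  shows "SDP m Y k \<le> (1 / (2 * real m)) * (\<Sum>i<m. \<Sum>j<m. distmat Y i j * Z j i)"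
  unfolding SDP_def
proof (rule cInf_lower)
  show "bdd_below {(1 / (2 * real m)) * (\<Sum>i<m. \<Sum>j<m. distmat Y i j * Z j i) | Z. SDP_feasible m k Z}"
  proof (rule bdd_belowI[of _ 0], clarify)
    fix Z' assume "SDP_feasible m k Z'"
    then have "\<forall>i<m. \<forall>j<m. Z' j i \<ge> 0" unfolding SDP_feasible_def by blast
    then show "0 \<le> (1 / (2 * real m)) * (\<Sum>i<m. \<Sum>j<m. distmat Y i j * Z' j i)"
      unfolding distmat_def by (intro mult_nonneg_nonneg sum_nonneg) auto
  qed
qed (use assms in blast)

lemma SDP_le_IP:
  fixes Y :: "nat \<Rightarrow> 'a::euclidean_space"
  assumes "1 \<le> k" "k \<le> m"
  shows "SDP m Y k \<le> IP m Y k"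
proof -
  obtain \<Gamma> where "\<Gamma> \<in> Partitions m k" and IP: "IP m Y k = (1 / real m) * cluster_cost Y \<Gamma>"
    using IP_attained[OF assms] by blast
  then have \<Gamma>: "partition_on {..<m} \<Gamma>" "card \<Gamma> = k" by (auto simp: Partitions_def)
  have "SDP m Y k \<le> (1 / (2 * real m)) * (\<Sum>i<m. \<Sum>j<m. distmat Y i j * cluster_matrix \<Gamma> j i)"
    by (rule SDP_le_objective[OF SDP_feasible_cluster_matrix[OF \<Gamma>]])
  also have "\<dots> = IP m Y k"
    by (simp add: trace_distmat_cluster_matrix[OF \<Gamma>(1)] IP)
  finally show ?thesis .
qed

text \<open>
  The uniform distribution on such a design makes each sampled index uniform on [n].
  Restricting to [s] keeps the relabelled tuple extensional, like the elements of samples_wr.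
\<close>

definition label_symmetric :: "nat \<Rightarrow> nat \<Rightarrow> (nat \<Rightarrow> nat) set \<Rightarrow> bool" where
  "label_symmetric n s A \<longleftrightarrow> A \<subseteq> samples_wr n s \<and>
     (\<forall>i\<in>A. \<forall>a<n. \<forall>b<n. restrict (Transposition.transpose a b \<circ> i) {..<s} \<in> A)"

lemma label_symmetricD:
  assumes "label_symmetric n s A"
  shows "A \<subseteq> samples_wr n s"
    and "i \<in> A \<Longrightarrow> a < n \<Longrightarrow> b < n \<Longrightarrow> restrict (Transposition.transpose a b \<circ> i) {..<s} \<in> A"
  using assms unfolding label_symmetric_def by blast+

lemma label_symmetric_samples_wr: "label_symmetric n s (samples_wr n s)"
  unfolding label_symmetric_def samples_wr_def
proof (intro conjI subset_refl ballI allI impI)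
  fix i a b assume "i \<in> (\<Pi>\<^sub>E x\<in>{..<s}. {..<n})" "a < n" "b < n"
  then show "restrict (Transposition.transpose a b \<circ> i) {..<s} \<in> (\<Pi>\<^sub>E x\<in>{..<s}. {..<n})"
    by (simp add: restrict_PiE_iff PiE_iff Transposition.transpose_def)
qed

lemma label_symmetric_samples_wor: "label_symmetric n s (samples_wor n s)"
  unfolding label_symmetric_def
proof (intro conjI ballI allI impI)
  show "samples_wor n s \<subseteq> samples_wr n s" by (auto simp: samples_wor_def)
  fix i a b assume i: "i \<in> samples_wor n s" and "a < n" "b < n"
  then have "restrict (Transposition.transpose a b \<circ> i) {..<s} \<in> samples_wr n s"
    using label_symmetricD(2)[OF label_symmetric_samples_wr] by (auto simp: samples_wor_def)
  moreover have "inj_on (restrict (Transposition.transpose a b \<circ> i) {..<s}) {..<s}"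
    using i by (simp add: samples_wor_def inj_on_restrict_eq comp_inj_on inj_on_subset[OF inj_transpose])
  ultimately show "restrict (Transposition.transpose a b \<circ> i) {..<s} \<in> samples_wor n s"
    by (simp add: samples_wor_def)
qed

lemma label_symmetric_finite:
  assumes "label_symmetric n s A"
  shows "finite A"
proof (rule finite_subset[OF label_symmetricD(1)[OF assms]])
  show "finite (samples_wr n s)" unfolding samples_wr_def by (intro finite_PiE) auto
qed

lemma card_coordinate_fibre_eq:
  assumes A: "label_symmetric n s A" and "j < s" "a < n" "b < n"
  shows "card {i\<in>A. i j = a} = card {i\<in>A. i j = b}"
proof -
  let ?\<tau> = "\<lambda>i. restrict (Transposition.transpose a b \<circ> i) {..<s}"
  have closed: "?\<tau> i \<in> A" if "i \<in> A" for i
    using label_symmetricD(2)[OF A that assms(3,4)] .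
  have involution: "?\<tau> (?\<tau> i) = i" if "i \<in> A" for i
  proof -
    have "Transposition.transpose a b \<circ> (Transposition.transpose a b \<circ> i) = i"
      by (rule ext) simp
    then have "?\<tau> (?\<tau> i) = restrict i {..<s}"
      by (simp only: restrict_compose_right)
    also have "\<dots> = i"
      using label_symmetricD(1)[OF A] that unfolding samples_wr_def by (intro PiE_restrict) blast
    finally show ?thesis .
  qed
  have coordinate: "?\<tau> i j = Transposition.transpose a b (i j)" for i
    using \<open>j < s\<close> by simp
  have image: "?\<tau> ` {i\<in>A. i j = a} = {i\<in>A. i j = b}"
  proof (intro equalityI subsetI)
    fix i assume "i \<in> ?\<tau> ` {i\<in>A. i j = a}"
    then obtain i' where "i' \<in> A" "i' j = a" "i = ?\<tau> i'" by blast
    then show "i \<in> {i\<in>A. i j = b}" using closed[of i'] coordinate[of i'] by simp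
  next
    fix i assume i: "i \<in> {i\<in>A. i j = b}"
    then have "?\<tau> i \<in> {i\<in>A. i j = a}" using closed[of i] coordinate[of i] by simp
    then have "?\<tau> (?\<tau> i) \<in> ?\<tau> ` {i\<in>A. i j = a}" by (rule imageI)
    then show "i \<in> ?\<tau> ` {i\<in>A. i j = a}" using involution[of i] i by simp
  qed
  have "inj_on ?\<tau> {i\<in>A. i j = a}"
    by (rule inj_on_inverseI[where g = ?\<tau>]) (simp add: involution)
  then show ?thesis using card_image image by fastforce
qed

lemma sum_coordinate_eq:
  fixes f :: "nat \<Rightarrow> real"
  assumes A: "label_symmetric n s A" and j: "j < s"
  shows "real n * (\<Sum>i\<in>A. f (i j)) = real (card A) * (\<Sum>a<n. f a)"
proof -
  let ?F = "\<lambda>a. {i\<in>A. i j = a}"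
  have by_fibres: "(\<Sum>i\<in>A. g (i j)) = (\<Sum>a<n. real (card (?F a)) * g a)" for g :: "nat \<Rightarrow> real"
  proof -
    have "(\<lambda>i. i j) ` A \<subseteq> {..<n}"
      using label_symmetricD(1)[OF A] j by (auto simp: samples_wr_def)
    then have "(\<Sum>i\<in>A. g (i j)) = (\<Sum>a<n. \<Sum>i\<in>?F a. g (i j))"
      using label_symmetric_finite[OF A] by (intro sum.group[symmetric]) auto
    then show ?thesis by simp
  qed
  have "real n * (\<Sum>a<n. real (card (?F a)) * f a) = (\<Sum>b<n. \<Sum>a<n. real (card (?F a)) * f a)"
    by simp
  also have "\<dots> = (\<Sum>b<n. \<Sum>a<n. real (card (?F b)) * f a)"
  proof (intro sum.cong refl)
    fix b a assume "b \<in> {..<n}" "a \<in> {..<n}"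
    then show "real (card (?F a)) * f a = real (card (?F b)) * f a"
      using card_coordinate_fibre_eq[OF A j, of a b] by simp
  qed
  also have "\<dots> = (\<Sum>b<n. real (card (?F b))) * (\<Sum>a<n. f a)"
    by (simp add: sum_product)
  finally show ?thesis using by_fibres[of f] by_fibres[of "\<lambda>_. 1"] by simp
qed

lemma expectation_coordinate_average:
  fixes f :: "nat \<Rightarrow> real"
  assumes A: "label_symmetric n s A" "A \<noteq> {}" and s: "0 < s"
  shows "measure_pmf.expectation (pmf_of_set A) (\<lambda>i. (1 / real s) * (\<Sum>j<s. f (i j)))
       = (\<Sum>a<n. f a) / real n"
proof -
  obtain i where "i \<in> A" using A(2) by blast
  then have "0 < n" using label_symmetricD(1)[OF A(1)] s by (force simp: samples_wr_def)
  have "measure_pmf.expectation (pmf_of_set A) (\<lambda>i. (1 / real s) * (\<Sum>j<s. f (i j)))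
      = (1 / real s) * (\<Sum>j<s. (\<Sum>i\<in>A. f (i j)) / real (card A))"
    using A label_symmetric_finite[OF A(1)]
    by (simp add: integral_pmf_of_set sum_distrib_left sum_divide_distrib sum.swap[of _ "{..<s}"])
  also have "\<dots> = (1 / real s) * (\<Sum>j<s. (\<Sum>a<n. f a) / real n)"
  proof (intro arg_cong[where f = "(*) _"] sum.cong refl)
    fix j assume "j \<in> {..<s}"
    then show "(\<Sum>i\<in>A. f (i j)) / real (card A) = (\<Sum>a<n. f a) / real n"
      using sum_coordinate_eq[OF A(1), of j f] \<open>0 < n\<close> A(2) label_symmetric_finite[OF A(1)]
      by (simp add: field_simps)
  qed
  also have "\<dots> = (\<Sum>a<n. f a) / real n" using s by simp
  finally show ?thesis .
qed

lemma expectation_pmf_of_set_mono: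
  fixes f g :: "'a \<Rightarrow> real"
  assumes "finite A" "A \<noteq> {}" "\<And>x. x \<in> A \<Longrightarrow> f x \<le> g x"
  shows "measure_pmf.expectation (pmf_of_set A) f \<le> measure_pmf.expectation (pmf_of_set A) g"
  using assms by (simp add: integral_pmf_of_set divide_right_mono sum_mono)

lemma expectation_SDP_le_expectation_IP:
  fixes X :: "nat \<Rightarrow> 'a::euclidean_space"
  assumes "finite A" "A \<noteq> {}" "1 \<le> k" "k \<le> s"
  shows "measure_pmf.expectation (pmf_of_set A) (\<lambda>i. SDP s (X \<circ> i) k)
       \<le> measure_pmf.expectation (pmf_of_set A) (\<lambda>i. IP s (X \<circ> i) k)"
  using assms by (intro expectation_pmf_of_set_mono SDP_le_IP)

lemma expectation_IP_sample_le_IP: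
  fixes X :: "nat \<Rightarrow> 'a::euclidean_space"
  assumes A: "label_symmetric n s A" "A \<noteq> {}" and k: "1 \<le> k" "k \<le> s" "k \<le> n"
  shows "measure_pmf.expectation (pmf_of_set A) (\<lambda>i. IP s (X \<circ> i) k) \<le> IP n X k"
proof -
  obtain \<Gamma> where "\<Gamma> \<in> Partitions n k" and IP: "IP n X k = (1 / real n) * cluster_cost X \<Gamma>"
    using IP_attained[OF k(1,3)] by blast
  then have \<Gamma>: "partition_on {..<n} \<Gamma>" "card \<Gamma> = k" by (auto simp: Partitions_def)
  define f where "f a = (norm (X a - centroid X (block_of \<Gamma> a)))\<^sup>2" for a
  have "IP s (X \<circ> i) k \<le> (1 / real s) * (\<Sum>j<s. f (i j))" if i: "i \<in> A" for i
  proof -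
    have "i ` {..<s} \<subseteq> {..<n}"
      using label_symmetricD(1)[OF A(1)] i by (auto simp: samples_wr_def PiE_iff)
    then have "block_of \<Gamma> ` i ` {..<s} \<subseteq> \<Gamma>"
      using block_of_mem(1)[OF \<Gamma>(1)] by blast
    then have "card ((block_of \<Gamma> \<circ> i) ` {..<s}) \<le> k"
      using card_mono[OF finite_elements[OF _ \<Gamma>(1)]] \<Gamma>(2) by (simp add: image_comp)
    from IP_le_labelling_cost[OF this k(2), of "X \<circ> i" "centroid X"]
    show ?thesis by (simp add: f_def)
  qed
  then have "measure_pmf.expectation (pmf_of_set A) (\<lambda>i. IP s (X \<circ> i) k)
      \<le> measure_pmf.expectation (pmf_of_set A) (\<lambda>i. (1 / real s) * (\<Sum>j<s. f (i j)))"
    using label_symmetric_finite[OF A(1)] A(2) by (intro expectation_pmf_of_set_mono)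
  also have "\<dots> = (\<Sum>a<n. f a) / real n"
    using A k by (intro expectation_coordinate_average) auto
  also have "(\<Sum>a<n. f a) = cluster_cost X \<Gamma>"
    unfolding sum.partition[OF finite_lessThan \<Gamma>(1)] cluster_cost_def f_def
    by (intro sum.cong refl) (simp add: block_of_eq[OF \<Gamma>(1)])
  finally show ?thesis using IP by (simp add: o_def)
qed

lemma samples_wr_nonempty: "0 < n \<Longrightarrow> samples_wr n s \<noteq> {}"
  by (simp add: samples_wr_def PiE_eq_empty_iff lessThan_empty_iff)

lemma samples_wor_nonempty: "s \<le> n \<Longrightarrow> samples_wor n s \<noteq> {}"
proof -
  assume "s \<le> n"
  then have "restrict id {..<s} \<in> samples_wor n s"
    by (auto simp: samples_wor_def samples_wr_def inj_on_def)
  then show ?thesis by blast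
qed

theorem lemma3:
  fixes X :: "nat \<Rightarrow> 'a::euclidean_space" and n k s :: nat
  assumes "k \<ge> 2" and "s \<ge> k" and "n \<ge> k"
  shows "(measure_pmf.expectation (pmf_of_set (samples_wr n s)) (\<lambda>i. SDP s (X \<circ> i) k)
            \<le> measure_pmf.expectation (pmf_of_set (samples_wr n s)) (\<lambda>i. IP s (X \<circ> i) k)
          \<and> measure_pmf.expectation (pmf_of_set (samples_wr n s)) (\<lambda>i. IP s (X \<circ> i) k)
            \<le> IP n X k)
       \<and> (s \<le> n \<longrightarrow>
          measure_pmf.expectation (pmf_of_set (samples_wor n s)) (\<lambda>i. SDP s (X \<circ> i) k)
            \<le> measure_pmf.expectation (pmf_of_set (samples_wor n s)) (\<lambda>i. IP s (X \<circ> i) k)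
          \<and> measure_pmf.expectation (pmf_of_set (samples_wor n s)) (\<lambda>i. IP s (X \<circ> i) k)
            \<le> IP n X k)"
proof -
  have k: "1 \<le> k" "k \<le> s" "k \<le> n" using assms by simp_all
  have bounds: "measure_pmf.expectation (pmf_of_set A) (\<lambda>i. SDP s (X \<circ> i) k)
            \<le> measure_pmf.expectation (pmf_of_set A) (\<lambda>i. IP s (X \<circ> i) k)
          \<and> measure_pmf.expectation (pmf_of_set A) (\<lambda>i. IP s (X \<circ> i) k) \<le> IP n X k"
    if "label_symmetric n s A" "A \<noteq> {}" for A
    using expectation_SDP_le_expectation_IP[OF label_symmetric_finite[OF that(1)] that(2) k(1,2)]
      expectation_IP_sample_le_IP[OF that k] by blast
  show ?thesis
    using bounds[OF label_symmetric_samples_wr samples_wr_nonempty]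
      bounds[OF label_symmetric_samples_wor samples_wor_nonempty] k by simp
qed

end
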